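(* Let $h:\mathbb{R}\to\mathbb{R}$ be of class $C^2$. Let $\mathcal{H}_0=\{(x,\varPhi)\in\mathbb{R}^2 \mid \varPhi>0,\ \varPhi^2\neq h(x)\}$ and equip it with the Riemannian metric \[ g_h=\frac{\left(h(x)-\varPhi^2\right)^2dx^2+d\varPhi^2}{\varPhi^2}. \] Then on the whole domain $\mathcal{H}_0$ the metric $g_h$ has constant sectional curvature equal to $-1$; i.e., it everywhere describes hyperbolic geometry.
   Context: $\mathcal{H}=\{(x,\varPhi)\in\mathbb{R}^2\mid \varPhi>0\}$ is the upper half plane. The expression for $g_h$ is degenerate exactly where $\varPhi^2=h(x)$, which is why these points are removed; the Riemannian manifold $\mathbb{M}_h=(\mathcal{H}_0,g_h)$ is called the Linear-$2^{\mathrm{nd}}$-order-ODE upper half plane. *)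

theory Defs
  imports "HOL-Analysis.Analysis"
begin

text \<open>Local coordinates on a chart of R^2: points are pairs (x, y); coordinate
  index 0 is x, index 1 is y.  A metric is given by its component functions
  g i j (i, j in {0,1}).\<close>

definition pd :: "nat \<Rightarrow> (real \<times> real \<Rightarrow> real) \<Rightarrow> real \<times> real \<Rightarrow> real" where
  "pd i f p = (if i = 0 then deriv (\<lambda>t. f (t, snd p)) (fst p)
                        else deriv (\<lambda>t. f (fst p, t)) (snd p))"

definition met_det :: "(nat \<Rightarrow> nat \<Rightarrow> real \<times> real \<Rightarrow> real) \<Rightarrow> real \<times> real \<Rightarrow> real" where
  "met_det g p = g 0 0 p * g 1 1 p - g 0 1 p * g 1 0 p"

definition met_inv :: "(nat \<Rightarrow> nat \<Rightarrow> real \<times> real \<Rightarrow> real) \<Rightarrow> nat \<Rightarrow> nat \<Rightarrow> real \<times> real \<Rightarrow> real" where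
  "met_inv g i j p =
     (if i = 0 \<and> j = 0 then g 1 1 p / met_det g p
      else if i = 1 \<and> j = 1 then g 0 0 p / met_det g p
      else - g i j p / met_det g p)"

definition christoffel :: "(nat \<Rightarrow> nat \<Rightarrow> real \<times> real \<Rightarrow> real) \<Rightarrow> nat \<Rightarrow> nat \<Rightarrow> nat \<Rightarrow> real \<times> real \<Rightarrow> real" where
  "christoffel g k i j p =
     (\<Sum>l<2. met_inv g k l p * (pd i (g j l) p + pd j (g i l) p - pd l (g i j) p)) / 2"

text \<open>Riemann tensor R^l_{ijk}, with R(d_i,d_j) d_k = sum_l R^l_{ijk} d_l and
  R(X,Y) = nabla_X nabla_Y - nabla_Y nabla_X - nabla_[X,Y].\<close>
definition riemann :: "(nat \<Rightarrow> nat \<Rightarrow> real \<times> real \<Rightarrow> real) \<Rightarrow> nat \<Rightarrow> nat \<Rightarrow> nat \<Rightarrow> nat \<Rightarrow> real \<times> real \<Rightarrow> real" where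
  "riemann g l i j k p =
     pd i (christoffel g l j k) p - pd j (christoffel g l i k) p
     + (\<Sum>m<2. christoffel g l i m p * christoffel g m j k p
              - christoffel g l j m p * christoffel g m i k p)"

text \<open>Sectional curvature of the (unique) tangent plane of a 2-dimensional
  Riemannian manifold: K = <R(d_0,d_1)d_1, d_0> / (|d_0|^2 |d_1|^2 - <d_0,d_1>^2).\<close>
definition sectional_curvature :: "(nat \<Rightarrow> nat \<Rightarrow> real \<times> real \<Rightarrow> real) \<Rightarrow> real \<times> real \<Rightarrow> real" where
  "sectional_curvature g p = (\<Sum>l<2. riemann g l 0 1 1 p * g l 0 p) / met_det g p"

definition g_h :: "(real \<Rightarrow> real) \<Rightarrow> nat \<Rightarrow> nat \<Rightarrow> real \<times> real \<Rightarrow> real" where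
  "g_h h i j p = (let x = fst p; \<Phi> = snd p in
     if i = 0 \<and> j = 0 then (h x - \<Phi>^2)^2 / \<Phi>^2
     else if i = 1 \<and> j = 1 then 1 / \<Phi>^2
     else 0)"

definition H0 :: "(real \<Rightarrow> real) \<Rightarrow> (real \<times> real) set" where
  "H0 h = {(x, \<Phi>). \<Phi> > 0 \<and> \<Phi>^2 \<noteq> h x}"

end

theory Submission
  imports Defs
begin

(* The metric is diagonal and its d\<Phi>^2 coefficient does not depend on x, so only \<Phi>-derivatives
   enter the curvature (in particular no derivative of h is needed): with \<Gamma> = \<Gamma>^0_01 = \<partial>_\<Phi> g_00 / (2 g_00),
   K = (\<Gamma> (\<Gamma>^1_11 - \<Gamma>) - \<partial>_\<Phi> \<Gamma>) / g_11.  For g_h, with d = \<Phi>^2 - h x, one finds \<Gamma> = 2\<Phi>/d - 1/\<Phi>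
   and \<Gamma>^1_11 = -1/\<Phi>, and all terms involving d cancel, leaving K = -1. *)

(* Keeps the coordinate index 1 a numeral, so that lemmas stated for index 1 apply. *)
declare One_nat_def [simp del]

lemma sum_lessThan_2: "(\<Sum>l<(2::nat). f l) = f 0 + f 1"
  by (simp add: numeral_2_eq_2 One_nat_def)

lemma pd_const [simp]: "pd i (\<lambda>_. c) p = 0"
  by (simp add: pd_def)

lemma pd_1_eqI_within_open:
  assumes "open S" "y \<in> S" "\<And>t. t \<in> S \<Longrightarrow> f (x, t) = u t"
    and "(u has_real_derivative D) (at y)"
  shows "pd 1 f (x, y) = D"
proof -
  have "((\<lambda>t. f (x, t)) has_real_derivative D) (at y)"
    using has_field_derivative_transform_within_open[OF assms(4,1,2)] assms(3) by metis
  then show ?thesis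
    by (simp add: pd_def DERIV_imp_deriv)
qed

lemma pd_1_eqI:
  "((\<lambda>t. f (x, t)) has_real_derivative D) (at y) \<Longrightarrow> pd 1 f (x, y) = D"
  by (rule pd_1_eqI_within_open[of UNIV]) auto

lemma christoffel_symmetric:
  assumes "\<And>i j. g i j = g j i"
  shows "christoffel g k i j = christoffel g k j i"
  by (simp add: fun_eq_iff christoffel_def assms[of i j] add.commute)

lemma christoffel_0_1_1_diagonal:
  assumes "g 0 1 = (\<lambda>_. 0)" "g 1 0 = (\<lambda>_. 0)" "\<And>q. pd 0 (g 1 1) q = 0"
  shows "christoffel g 0 1 1 = (\<lambda>_. 0)"
  unfolding christoffel_def sum_lessThan_2 by (simp add: met_inv_def assms)

lemma christoffel_0_0_1_diagonal:
  assumes "g 0 1 = (\<lambda>_. 0)" "g 1 0 = (\<lambda>_. 0)" "g 1 1 p \<noteq> 0"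
  shows "christoffel g 0 0 1 p = pd 1 (g 0 0) p / (2 * g 0 0 p)"
  using assms unfolding christoffel_def sum_lessThan_2 by (simp add: met_inv_def met_det_def)

lemma christoffel_1_1_1_diagonal:
  assumes "g 0 1 = (\<lambda>_. 0)" "g 1 0 = (\<lambda>_. 0)" "g 0 0 p \<noteq> 0"
  shows "christoffel g 1 1 1 p = pd 1 (g 1 1) p / (2 * g 1 1 p)"
  using assms unfolding christoffel_def sum_lessThan_2 by (simp add: met_inv_def met_det_def)

lemma sectional_curvature_diagonal:
  assumes sym: "\<And>i j. g i j = g j i" and diag: "g 0 1 = (\<lambda>_. 0)"
    and indep: "\<And>q. pd 0 (g 1 1) q = 0"
    and "g 0 0 p \<noteq> 0" "g 1 1 p \<noteq> 0"
  shows "sectional_curvature g p =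
    (christoffel g 0 0 1 p * (christoffel g 1 1 1 p - christoffel g 0 0 1 p)
       - pd 1 (christoffel g 0 0 1) p) / g 1 1 p"
proof -
  have diag': "g 1 0 = (\<lambda>_. 0)"
    using diag sym by metis
  have "sectional_curvature g p = riemann g 0 0 1 1 p / g 1 1 p"
    using assms unfolding sectional_curvature_def sum_lessThan_2 by (simp add: met_det_def diag')
  also have "riemann g 0 0 1 1 p =
    christoffel g 0 0 1 p * (christoffel g 1 1 1 p - christoffel g 0 0 1 p)
      - pd 1 (christoffel g 0 0 1) p"
    unfolding riemann_def sum_lessThan_2 christoffel_symmetric[of g 0 1 0, OF sym]
    by (simp add: christoffel_0_1_1_diagonal[OF diag diag' indep]
        right_diff_distrib)
  finally show ?thesis .
qed

lemma g_h_symmetric: "g_h h i j = g_h h j i"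
  by (auto simp: g_h_def fun_eq_iff)

lemma g_h_0_1: "g_h h 0 1 = (\<lambda>_. 0)"
  by (simp add: g_h_def fun_eq_iff)

lemma g_h_0_0: "g_h h 0 0 (x, \<Phi>) = (h x - \<Phi>^2)^2 / \<Phi>^2"
  by (simp add: g_h_def)

lemma g_h_1_1: "g_h h 1 1 = (\<lambda>p. 1 / snd p ^ 2)"
  by (simp add: g_h_def fun_eq_iff)

lemma pd_0_g_h_1_1: "pd 0 (g_h h 1 1) p = 0"
  by (simp add: pd_def g_h_1_1)

lemma pd_1_g_h_0_0:
  assumes "\<Phi> \<noteq> 0"
  shows "pd 1 (g_h h 0 0) (x, \<Phi>) = 2 * (\<Phi>^2 - h x) * (\<Phi>^2 + h x) / \<Phi>^3"
proof (rule pd_1_eqI)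
  show "((\<lambda>t. g_h h 0 0 (x, t)) has_real_derivative
      2 * (\<Phi>^2 - h x) * (\<Phi>^2 + h x) / \<Phi>^3) (at \<Phi>)"
    unfolding g_h_0_0
    by (rule derivative_eq_intros refl | simp add: assms)+
      (simp add: assms field_simps power_eq_if)
qed

lemma pd_1_g_h_1_1:
  assumes "\<Phi> \<noteq> 0"
  shows "pd 1 (g_h h 1 1) (x, \<Phi>) = -2 / \<Phi>^3"
proof (rule pd_1_eqI)
  show "((\<lambda>t. g_h h 1 1 (x, t)) has_real_derivative -2 / \<Phi>^3) (at \<Phi>)"
    unfolding g_h_1_1
    by (rule derivative_eq_intros refl | simp add: assms)+
      (simp add: assms field_simps power_eq_if)
qed

lemma christoffel_0_0_1_g_h:
  assumes "\<Phi> \<noteq> 0" "\<Phi>^2 \<noteq> h x"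
  shows "christoffel (g_h h) 0 0 1 (x, \<Phi>) = 2 * \<Phi> / (\<Phi>^2 - h x) - 1 / \<Phi>"
proof -
  have "christoffel (g_h h) 0 0 1 (x, \<Phi>) = pd 1 (g_h h 0 0) (x, \<Phi>) / (2 * g_h h 0 0 (x, \<Phi>))"
    using assms(1)
    by (intro christoffel_0_0_1_diagonal) (simp_all add: g_h_def fun_eq_iff)
  also have "\<dots> = 2 * \<Phi> / (\<Phi>^2 - h x) - 1 / \<Phi>"
  proof -
    define d where "d = \<Phi>^2 - h x"
    have "d \<noteq> 0" and hx: "h x = \<Phi>^2 - d"
      using assms(2) by (auto simp: d_def)
    then show ?thesis
      unfolding pd_1_g_h_0_0[OF assms(1)] g_h_0_0 hx
      using assms(1) by (simp add: field_simps power2_eq_square power3_eq_cube)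
  qed
  finally show ?thesis .
qed

lemma christoffel_1_1_1_g_h:
  assumes "\<Phi> \<noteq> 0" "\<Phi>^2 \<noteq> h x"
  shows "christoffel (g_h h) 1 1 1 (x, \<Phi>) = -1 / \<Phi>"
proof -
  have "christoffel (g_h h) 1 1 1 (x, \<Phi>) = pd 1 (g_h h 1 1) (x, \<Phi>) / (2 * g_h h 1 1 (x, \<Phi>))"
    using assms
    by (intro christoffel_1_1_1_diagonal) (simp_all add: g_h_def fun_eq_iff)
  also have "\<dots> = -1 / \<Phi>"
    unfolding pd_1_g_h_1_1[OF assms(1)]
    using assms(1) by (simp add: g_h_def field_simps power_eq_if)
  finally show ?thesis .
qed

lemma pd_1_christoffel_0_0_1_g_h:
  assumes "\<Phi> \<noteq> 0" "\<Phi>^2 \<noteq> h x"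
  shows "pd 1 (christoffel (g_h h) 0 0 1) (x, \<Phi>) =
    (2 * (\<Phi>^2 - h x) - 4 * \<Phi>^2) / (\<Phi>^2 - h x)^2 + 1 / \<Phi>^2"
proof (rule pd_1_eqI_within_open)
  let ?S = "{t. t \<noteq> 0 \<and> t^2 \<noteq> h x}"
  show "open ?S"
    by (intro open_Collect_conj open_Collect_neq continuous_intros)
  show "\<Phi> \<in> ?S"
    using assms by simp
  show "christoffel (g_h h) 0 0 1 (x, t) = 2 * t / (t^2 - h x) - 1 / t" if "t \<in> ?S" for t
    using that by (simp add: christoffel_0_0_1_g_h)
  show "((\<lambda>t. 2 * t / (t^2 - h x) - 1 / t) has_real_derivative
      (2 * (\<Phi>^2 - h x) - 4 * \<Phi>^2) / (\<Phi>^2 - h x)^2 + 1 / \<Phi>^2) (at \<Phi>)"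
    using assms by (auto intro!: derivative_eq_intros simp: power2_eq_square)
qed

theorem lemma2p3:
  fixes h :: "real \<Rightarrow> real"
  assumes C2: "\<exists>h' h''. (\<forall>x. (h has_real_derivative h' x) (at x))
                      \<and> (\<forall>x. (h' has_real_derivative h'' x) (at x))
                      \<and> continuous_on UNIV h''"
  shows "\<forall>p \<in> H0 h. sectional_curvature (g_h h) p = -1"
proof
  fix p assume "p \<in> H0 h"
  then obtain x \<Phi> where p: "p = (x, \<Phi>)" and \<Phi>: "\<Phi> \<noteq> 0" "\<Phi>^2 \<noteq> h x"
    by (auto simp: H0_def)
  define d where "d = \<Phi>^2 - h x"
  have "d \<noteq> 0"
    using \<Phi>(2) by (simp add: d_def)
  have "sectional_curvature (g_h h) p =
    ((2 * \<Phi> / d - 1 / \<Phi>) * (-1 / \<Phi> - (2 * \<Phi> / d - 1 / \<Phi>))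
      - ((2 * d - 4 * \<Phi>^2) / d^2 + 1 / \<Phi>^2)) / (1 / \<Phi>^2)"
    unfolding p d_def
    using \<Phi>
    by (subst sectional_curvature_diagonal[OF g_h_symmetric g_h_0_1 pd_0_g_h_1_1])
      (simp_all add: g_h_0_0 g_h_1_1 christoffel_0_0_1_g_h christoffel_1_1_1_g_h
         pd_1_christoffel_0_0_1_g_h)
  also have "\<dots> = -1"
    using \<open>d \<noteq> 0\<close> \<Phi>(1) by (simp add: field_simps power2_eq_square)
  finally show "sectional_curvature (g_h h) p = -1" .
qed

end
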